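(* Let $n\ge 1$, $A\in\mathbb{R}^{n\times n}$ and $C\in\mathbb{R}^{1\times n}$. Assume that $(A,C)$ is an observable pair and that all eigenvalues of $A$ are nonzero. Let $t_1\in\{0,1,2,\ldots\}$ and let $\bar t$ be a positive integer that is not a pathological sampling period of $A$. Then the $n\times n$ matrix with rows $CA^{t_1},CA^{t_1+\bar t},CA^{t_1+2\bar t},\ldots,CA^{t_1+(n-1)\bar t}$ has rank $n$.
   Context: Setting: discrete-time single-output system $x(t+1)=Ax(t)+Bu(t)$, $y(t)=Cx(t)+Du(t)$ with output measured at selected time instances; for time instances $t_1,\ldots,t_l$, the sample-based observability matrix is the matrix with rows $CA^{t_1},\ldots,CA^{t_l}$, and sample-based observability means this matrix has rank $n$. $(A,C)$ is observable if the matrix with rows $C,CA,\ldots,CA^{n-1}$ has rank $n$. A positive integer $h$ is called a pathological sampling period of $A$ if there exist two distinct eigenvalues $\lambda_p\neq\lambda_q$ of $A$, belonging to different Jordan blocks of the Jordan form of $A$, such that $\lambda_p^h=\lambda_q^h$ (equivalently, $|\lambda_p|=|\lambda_q|$ and $\pi/(\phi_q-\phi_p)=h/(2(k_q-k_p))$ for some distinct $k_p,k_q\in\{0,\ldots,h-1\}$, where $\phi_i$ is the phase of $\lambda_i$). *)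

theory Defs
  imports "Jordan_Normal_Form.DL_Rank" "Jordan_Normal_Form.Char_Poly"
begin

definition sample_obs_matrix :: "real mat \<Rightarrow> real mat \<Rightarrow> nat list \<Rightarrow> real mat" where
  "sample_obs_matrix A C ts = mat_of_rows (dim_col A) (map (\<lambda>t. row (C * A ^\<^sub>m t) 0) ts)"

definition observable :: "real mat \<Rightarrow> real mat \<Rightarrow> bool" where
  "observable A C \<longleftrightarrow>
     vec_space.rank (dim_col A) (sample_obs_matrix A C [0..<dim_col A]) = dim_col A"

definition ceigenvalue :: "real mat \<Rightarrow> complex \<Rightarrow> bool" where
  "ceigenvalue A z \<longleftrightarrow> eigenvalue (map_mat complex_of_real A) z"

(* h is a pathological sampling period of A: two distinct eigenvalues (hence in
   different Jordan blocks) with equal h-th powers *)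
definition pathological_period :: "real mat \<Rightarrow> nat \<Rightarrow> bool" where
  "pathological_period A h \<longleftrightarrow> 0 < h \<and>
     (\<exists>lp lq. ceigenvalue A lp \<and> ceigenvalue A lq \<and> lp \<noteq> lq \<and> lp ^ h = lq ^ h)"

end

(*
  Suppose the sampled matrix were singular, so that some nonzero complex x has
  c A^(t1 + k tbar) x = 0 for all k < n.  With B = A^tbar and c' = c A^t1 this says that x is
  orthogonal to the Krylov functionals c' B^k, k < n.  A shift w |-> (B - mu) w preserves this
  with one index fewer, and after Schur triangularisation of B one sees that at most n - 1 shifts
  produce an eigenvector v of B with c' v = 0.  Since A has no zero eigenvalue and z |-> z^tbar is
  injective on its spectrum, v is even an eigenvector of A: on the eigenspace of B containing v
  the quotient (A^tbar - a^tbar)/(A - a) is injective.  Hence c v = 0 and c A^i v = 0 for all i,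
  contradicting the observability of (A, C).
*)
theory Submission
  imports Defs "Jordan_Normal_Form.Schur_Decomposition"
begin

lemma pow_mat_add:
  fixes A :: "'a::semiring_1 mat"
  assumes "A \<in> carrier_mat n n"
  shows "A ^\<^sub>m (a + b) = A ^\<^sub>m a * A ^\<^sub>m b"
  using assms by (induction b) (auto simp: assoc_mult_mat[of _ n n _ n _ n])

lemma pow_mat_mult:
  fixes A :: "'a::semiring_1 mat"
  assumes "A \<in> carrier_mat n n"
  shows "A ^\<^sub>m (a * b) = (A ^\<^sub>m a) ^\<^sub>m b"
proof (induction b)
  case (Suc b)
  have "A ^\<^sub>m (a * Suc b) = A ^\<^sub>m (a * b) * A ^\<^sub>m a"
    using pow_mat_add[OF assms, of "a * b" a] by (simp add: add.commute)
  then show ?case using Suc by simp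
qed simp

lemma pow_mat_commute:
  fixes A :: "'a::semiring_1 mat"
  assumes "A \<in> carrier_mat n n"
  shows "A ^\<^sub>m k * A = A * A ^\<^sub>m k"
  using pow_mat_add[OF assms, of 1 k] pow_mat_add[OF assms, of k 1] assms by (simp add: add.commute)

lemma smult_vec_cancel:
  fixes v :: "'a::field vec"
  assumes "v \<in> carrier_vec n" "v \<noteq> 0\<^sub>v n" "a \<cdot>\<^sub>v v = b \<cdot>\<^sub>v v"
  shows "a = b"
proof -
  obtain i where "i < n" "v $ i \<noteq> 0"
    using assms(1,2) by (metis eq_vecI index_zero_vec carrier_vecD)
  moreover have "a * v $ i = b * v $ i"
    using arg_cong[OF assms(3), of "\<lambda>w. w $ i"] \<open>i < n\<close> assms(1) by simp
  ultimately show ?thesis by simp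
qed

lemma minus_vec_eq_0_iff:
  fixes a b :: "'a::ab_group_add vec"
  assumes "a \<in> carrier_vec n" "b \<in> carrier_vec n"
  shows "a - b = 0\<^sub>v n \<longleftrightarrow> a = b"
proof
  assume diff: "a - b = 0\<^sub>v n"
  show "a = b"
  proof (rule eq_vecI)
    fix i assume "i < dim_vec b"
    then have "i < n" "(a - b) $ i = 0" using diff assms by auto
    then show "a $ i = b $ i" using assms by simp
  qed (use assms in simp)
qed (use assms in simp)

lemma mult_mat_vec_zero_right[simp]:
  "A \<in> carrier_mat nr nc \<Longrightarrow> A *\<^sub>v 0\<^sub>v nc = 0\<^sub>v nr"
  by (intro eq_vecI) auto

lemma pow_mat_Suc_mult_vec:
  assumes "M \<in> carrier_mat n n" "z \<in> carrier_vec n"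
  shows "M ^\<^sub>m Suc k *\<^sub>v z = M ^\<^sub>m k *\<^sub>v (M *\<^sub>v z)"
  using assms by (simp add: assoc_mult_mat_vec[of _ n n _ n])

lemma smult_mat_mult_vec:
  "A \<in> carrier_mat nr nc \<Longrightarrow> z \<in> carrier_vec nc \<Longrightarrow> (l \<cdot>\<^sub>m A) *\<^sub>v z = l \<cdot>\<^sub>v (A *\<^sub>v z)"
  by (intro eq_vecI) (auto simp: scalar_prod_def sum_distrib_left mult.assoc)

lemma upper_triangular_mult_vec_index:
  fixes T :: "'a::comm_ring_1 mat"
  assumes T: "T \<in> carrier_mat n n" "upper_triangular T"
    and w: "w \<in> carrier_vec n" "\<And>k. m < k \<Longrightarrow> k < n \<Longrightarrow> w $ k = 0"
    and i: "m \<le> i" "i < n"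
  shows "(T *\<^sub>v w) $ i = T $$ (i, i) * w $ i"
proof -
  have "(T *\<^sub>v w) $ i = (\<Sum>k\<in>{0..<n}. T $$ (i, k) * w $ k)"
    using T w i by (simp add: scalar_prod_def)
  also have "\<dots> = (\<Sum>k\<in>{0..<n}. if k = i then T $$ (i, i) * w $ i else 0)"
  proof (rule sum.cong[OF refl])
    fix k assume "k \<in> {0..<n}"
    then show "T $$ (i, k) * w $ k = (if k = i then T $$ (i, i) * w $ i else 0)"
      using upper_triangularD[OF T(2), of k i] T w(2)[of k] i by (cases k i rule: linorder_cases) auto
  qed
  finally show ?thesis using i by simp
qed

lemma upper_triangular_shifts_reach_eigenvector:
  fixes T :: "'a::field mat"
  assumes T: "T \<in> carrier_mat n n" "upper_triangular T"
    and step: "\<And>j w \<mu>. P j w \<Longrightarrow> w \<in> carrier_vec n \<Longrightarrow> P (Suc j) (T *\<^sub>v w - \<mu> \<cdot>\<^sub>v w)"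
    and "P j w" "w \<in> carrier_vec n" "w \<noteq> 0\<^sub>v n" "\<And>i. m \<le> i \<Longrightarrow> i < n \<Longrightarrow> w $ i = 0"
  shows "\<exists>j' v \<mu>. j' < j + m \<and> P j' v \<and> eigenvector T v \<mu>"
  using assms(4-)
proof (induction m arbitrary: j w)
  case 0
  then have "w = 0\<^sub>v n" by (intro eq_vecI) auto
  with 0 show ?case by simp
next
  case (Suc m)
  define \<mu> where "\<mu> = T $$ (m, m)"
  define w' where "w' = T *\<^sub>v w - \<mu> \<cdot>\<^sub>v w"
  have w': "w' \<in> carrier_vec n" "P (Suc j) w'"
    unfolding w'_def using T Suc.prems(2) step[OF Suc.prems(1,2)] by auto
  show ?case
  proof (cases "w' = 0\<^sub>v n")
    case True
    then have "T *\<^sub>v w = \<mu> \<cdot>\<^sub>v w"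
      using T Suc.prems(2) minus_vec_eq_0_iff[of "T *\<^sub>v w" n "\<mu> \<cdot>\<^sub>v w"]
      unfolding w'_def by auto
    then have "eigenvector T w \<mu>"
      using T Suc.prems(2,3) unfolding eigenvector_def by simp
    with Suc.prems(1) show ?thesis by (intro exI[of _ j]) auto
  next
    case False
    \<comment> \<open>subtracting the last diagonal entry kills the last nonzero coordinate\<close>
    have "w' $ i = 0" if "m \<le> i" "i < n" for i
    proof -
      have "(T *\<^sub>v w) $ i = T $$ (i, i) * w $ i"
        using upper_triangular_mult_vec_index[OF T Suc.prems(2) _ that] Suc.prems(4) by simp
      moreover have "i = m \<or> w $ i = 0" using Suc.prems(4) that by (cases "i = m") auto
      ultimately show ?thesis unfolding w'_def \<mu>_def using that T Suc.prems(2) by auto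
    qed
    from Suc.IH[OF w'(2,1) False this] show ?thesis by auto
  qed
qed

lemma shifts_reach_eigenvector:
  fixes M :: "complex mat"
  assumes M: "M \<in> carrier_mat n n"
    and step: "\<And>j w \<mu>. P j w \<Longrightarrow> w \<in> carrier_vec n \<Longrightarrow> P (Suc j) (M *\<^sub>v w - \<mu> \<cdot>\<^sub>v w)"
    and x: "P 0 x" "x \<in> carrier_vec n" "x \<noteq> 0\<^sub>v n"
  obtains j v \<mu> where "j < n" "P j v" "eigenvector M v \<mu>"
proof -
  obtain es where "char_poly M = (\<Prod>a\<leftarrow>es. [:- a, 1:])"
    using char_poly_factorized[OF M] by blast
  then obtain T U V where T: "T \<in> carrier_mat n n" "upper_triangular T"
    and sim: "similar_mat_wit M T U V"
    using schur_decomposition_exists[OF M] unfolding similar_mat_def by blast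
  from similar_mat_witD2[OF M sim]
  have U: "U \<in> carrier_mat n n" and V: "V \<in> carrier_mat n n"
    and UV: "U * V = 1\<^sub>m n" and VU: "V * U = 1\<^sub>m n" and MUTV: "M = U * T * V" by auto
  have UV_vec: "U *\<^sub>v (V *\<^sub>v w) = w" "V *\<^sub>v (U *\<^sub>v w) = w" if "w \<in> carrier_vec n" for w
    using U V UV VU that by (metis assoc_mult_mat_vec one_mult_mat_vec)+
  have MU: "M *\<^sub>v (U *\<^sub>v w) = U *\<^sub>v (T *\<^sub>v w)" if "w \<in> carrier_vec n" for w
    unfolding MUTV using U T V that UV_vec(2) by (simp add: assoc_mult_mat_vec[of _ n n _ n])
  define P' where "P' j w \<longleftrightarrow> w \<in> carrier_vec n \<and> P j (U *\<^sub>v w)" for j w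
  have step': "P' (Suc j) (T *\<^sub>v w - \<mu> \<cdot>\<^sub>v w)" if "P' j w" "w \<in> carrier_vec n" for j w \<mu>
  proof -
    have "U *\<^sub>v (T *\<^sub>v w - \<mu> \<cdot>\<^sub>v w) = M *\<^sub>v (U *\<^sub>v w) - \<mu> \<cdot>\<^sub>v (U *\<^sub>v w)"
      using that U T by (simp add: MU mult_minus_distrib_mat_vec[of _ n n] mult_mat_vec[of _ n n])
    then show ?thesis using step[of j "U *\<^sub>v w" \<mu>] that U T unfolding P'_def by auto
  qed
  have "P' 0 (V *\<^sub>v x)" "V *\<^sub>v x \<noteq> 0\<^sub>v n"
    unfolding P'_def using x V U UV_vec by (auto, metis U mult_mat_vec_zero_right)
  then obtain j w \<mu> where "j < n" "P' j w" "eigenvector T w \<mu>"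
    using upper_triangular_shifts_reach_eigenvector[OF T, of P' 0 "V *\<^sub>v x" n] step' x V by force
  moreover have "eigenvector M (U *\<^sub>v w) \<mu>"
    using \<open>eigenvector T w \<mu>\<close> U T M unfolding eigenvector_def
    by (auto simp: MU mult_mat_vec[of _ n n]) (metis UV_vec(2) V mult_mat_vec_zero_right)
  ultimately show ?thesis using that unfolding P'_def by blast
qed

lemma invariant_set_contains_eigenvector:
  fixes M :: "complex mat"
  assumes "M \<in> carrier_mat n n"
    and "\<And>w \<mu>. w \<in> S \<Longrightarrow> w \<in> carrier_vec n \<Longrightarrow> M *\<^sub>v w - \<mu> \<cdot>\<^sub>v w \<in> S"
    and "x \<in> S" "x \<in> carrier_vec n" "x \<noteq> 0\<^sub>v n"
  obtains v \<mu> where "v \<in> S" "eigenvector M v \<mu>"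
proof (rule shifts_reach_eigenvector[of M n "\<lambda>_ w. w \<in> S" x])
qed (use assms in auto)

lemma krylov_orthogonal_imp_orthogonal_eigenvector:
  fixes M :: "complex mat" and c x :: "complex vec"
  assumes M: "M \<in> carrier_mat n n" and c: "c \<in> carrier_vec n"
    and x: "x \<in> carrier_vec n" "x \<noteq> 0\<^sub>v n" "\<And>k. k < n \<Longrightarrow> c \<bullet> (M ^\<^sub>m k *\<^sub>v x) = 0"
  obtains v \<mu> where "eigenvector M v \<mu>" "c \<bullet> v = 0"
proof -
  define P where "P j z \<longleftrightarrow> z \<in> carrier_vec n \<and> (\<forall>k. k + j < n \<longrightarrow> c \<bullet> (M ^\<^sub>m k *\<^sub>v z) = 0)"
    for j z
  have step: "P (Suc j) (M *\<^sub>v z - \<mu> \<cdot>\<^sub>v z)" if "P j z" "z \<in> carrier_vec n" for j z \<mu>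
    unfolding P_def
  proof (intro conjI allI impI)
    show "M *\<^sub>v z - \<mu> \<cdot>\<^sub>v z \<in> carrier_vec n" using M that by auto
    fix k assume "k + Suc j < n"
    then have "Suc k + j < n" "k + j < n" by simp_all
    then have "c \<bullet> (M ^\<^sub>m Suc k *\<^sub>v z) = 0" "c \<bullet> (M ^\<^sub>m k *\<^sub>v z) = 0"
      using that(1) unfolding P_def by blast+
    then have "c \<bullet> (M ^\<^sub>m k *\<^sub>v (M *\<^sub>v z)) = 0" "c \<bullet> (M ^\<^sub>m k *\<^sub>v z) = 0"
      by (simp_all only: pow_mat_Suc_mult_vec[OF M that(2)])
    moreover have "M ^\<^sub>m k *\<^sub>v (M *\<^sub>v z - \<mu> \<cdot>\<^sub>v z) = M ^\<^sub>m k *\<^sub>v (M *\<^sub>v z) - \<mu> \<cdot>\<^sub>v (M ^\<^sub>m k *\<^sub>v z)"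
      using M that(2) by (simp add: mult_minus_distrib_mat_vec[of _ n n] mult_mat_vec[of _ n n])
    moreover have "c \<bullet> (M ^\<^sub>m k *\<^sub>v (M *\<^sub>v z) - \<mu> \<cdot>\<^sub>v (M ^\<^sub>m k *\<^sub>v z))
        = c \<bullet> (M ^\<^sub>m k *\<^sub>v (M *\<^sub>v z)) - \<mu> * (c \<bullet> (M ^\<^sub>m k *\<^sub>v z))"
    proof -
      have "M ^\<^sub>m k *\<^sub>v (M *\<^sub>v z) \<in> carrier_vec n" "\<mu> \<cdot>\<^sub>v (M ^\<^sub>m k *\<^sub>v z) \<in> carrier_vec n"
        using M that(2) by (metis mult_mat_vec_carrier pow_carrier_mat smult_carrier_vec)+
      then show ?thesis using c by (simp add: scalar_prod_minus_distrib[OF c])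
    qed
    ultimately show "c \<bullet> (M ^\<^sub>m k *\<^sub>v (M *\<^sub>v z - \<mu> \<cdot>\<^sub>v z)) = 0" by simp
  qed
  have "P 0 x" unfolding P_def using x by simp
  then obtain j v \<mu> where "j < n" "P j v" "eigenvector M v \<mu>"
    using shifts_reach_eigenvector[OF M step \<open>P 0 x\<close> x(1,2)] by blast
  then have v: "v \<in> carrier_vec n" and "\<forall>k. k + j < n \<longrightarrow> c \<bullet> (M ^\<^sub>m k *\<^sub>v v) = 0"
    unfolding P_def by auto
  then have "c \<bullet> (M ^\<^sub>m 0 *\<^sub>v v) = 0" using \<open>j < n\<close> by (metis add_0)
  then show ?thesis using that[OF \<open>eigenvector M v \<mu>\<close>] M v by simp
qed

text \<open>\<open>geom_sum_mat M l k\<close> is \<open>\<Sum>i<k. l^(k-1-i) M^i\<close>, the quotient \<open>(M^k - l^k) / (M - l)\<close>.\<close>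
primrec geom_sum_mat :: "'a::comm_ring_1 mat \<Rightarrow> 'a \<Rightarrow> nat \<Rightarrow> 'a mat" where
  "geom_sum_mat M l 0 = 0\<^sub>m (dim_row M) (dim_row M)"
| "geom_sum_mat M l (Suc k) = l \<cdot>\<^sub>m geom_sum_mat M l k + M ^\<^sub>m k"

lemma geom_sum_mat_carrier[simp]: "M \<in> carrier_mat n n \<Longrightarrow> geom_sum_mat M l k \<in> carrier_mat n n"
  by (induction k) auto

lemma geom_sum_mat_Suc_mult_vec:
  "M \<in> carrier_mat n n \<Longrightarrow> z \<in> carrier_vec n \<Longrightarrow>
    geom_sum_mat M l (Suc k) *\<^sub>v z = l \<cdot>\<^sub>v (geom_sum_mat M l k *\<^sub>v z) + M ^\<^sub>m k *\<^sub>v z"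
  by (simp add: add_mult_distrib_mat_vec[of _ n n] smult_mat_mult_vec[of _ n n])

lemma geom_sum_mat_commute:
  fixes M :: "'a::comm_ring_1 mat"
  assumes M: "M \<in> carrier_mat n n"
  shows "geom_sum_mat M l k * M = M * geom_sum_mat M l k"
proof (induction k)
  case (Suc k)
  have R: "geom_sum_mat M l k \<in> carrier_mat n n" using M by simp
  have "geom_sum_mat M l (Suc k) * M = l \<cdot>\<^sub>m (geom_sum_mat M l k * M) + M ^\<^sub>m k * M"
    using M R by (simp add: add_mult_distrib_mat[of _ n n] mult_smult_assoc_mat[of _ n n])
  also have "\<dots> = M * geom_sum_mat M l (Suc k)"
    using M R Suc by (simp add: mult_add_distrib_mat[of M n n _ n] mult_smult_distrib[of M n n _ n]
        pow_mat_commute)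
  finally show ?case .
qed (use M in simp)

lemma geom_sum_mat_mult_shift:
  fixes M :: "'a::field mat"
  assumes M: "M \<in> carrier_mat n n" and z: "z \<in> carrier_vec n"
  shows "geom_sum_mat M l k *\<^sub>v (M *\<^sub>v z - l \<cdot>\<^sub>v z) = M ^\<^sub>m k *\<^sub>v z - l ^ k \<cdot>\<^sub>v z"
proof (induction k)
  case 0 then show ?case using M z by (intro eq_vecI) auto
next
  case (Suc k)
  let ?u = "M *\<^sub>v z - l \<cdot>\<^sub>v z"
  have "?u \<in> carrier_vec n" using M z by auto
  then have "geom_sum_mat M l (Suc k) *\<^sub>v ?u = l \<cdot>\<^sub>v (M ^\<^sub>m k *\<^sub>v z - l ^ k \<cdot>\<^sub>v z) + M ^\<^sub>m k *\<^sub>v ?u"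
    using geom_sum_mat_Suc_mult_vec[OF M] Suc by simp
  also have "M ^\<^sub>m k *\<^sub>v ?u = M ^\<^sub>m k *\<^sub>v (M *\<^sub>v z) - l \<cdot>\<^sub>v (M ^\<^sub>m k *\<^sub>v z)"
    using M z by (simp add: mult_minus_distrib_mat_vec[of _ n n] mult_mat_vec[of _ n n])
  finally show ?case unfolding pow_mat_Suc_mult_vec[OF M z]
    using M z by (intro eq_vecI) (auto simp: algebra_simps)
qed

lemma geom_sum_mat_eigenvector:
  fixes M :: "'a::field mat"
  assumes M: "M \<in> carrier_mat n n" and v: "eigenvector M v l"
  shows "geom_sum_mat M l k *\<^sub>v v = (of_nat k * l ^ (k - 1)) \<cdot>\<^sub>v v"
proof (induction k)
  case 0 then show ?case using M v unfolding eigenvector_def by (intro eq_vecI) auto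
next
  case (Suc k)
  have vc: "v \<in> carrier_vec n" using M v unfolding eigenvector_def by auto
  have "geom_sum_mat M l (Suc k) *\<^sub>v v = l \<cdot>\<^sub>v ((of_nat k * l ^ (k - 1)) \<cdot>\<^sub>v v) + l ^ k \<cdot>\<^sub>v v"
    using geom_sum_mat_Suc_mult_vec[OF M vc] Suc eigenvector_pow[OF M v] by simp
  then show ?case using vc by (intro eq_vecI) (auto simp: algebra_simps power_eq_if)
qed

lemma commute_mat_eigenspace_shift:
  fixes A N :: "'a::field mat"
  assumes A: "A \<in> carrier_mat n n" and N: "N \<in> carrier_mat n n" and AN: "N * A = A * N"
    and w: "w \<in> carrier_vec n" "N *\<^sub>v w = \<mu> \<cdot>\<^sub>v w"
  shows "N *\<^sub>v (A *\<^sub>v w - \<nu> \<cdot>\<^sub>v w) = \<mu> \<cdot>\<^sub>v (A *\<^sub>v w - \<nu> \<cdot>\<^sub>v w)"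
proof -
  have "N *\<^sub>v (A *\<^sub>v w) = A *\<^sub>v (N *\<^sub>v w)"
    using A N w by (metis AN assoc_mult_mat_vec)
  then have "N *\<^sub>v (A *\<^sub>v w - \<nu> \<cdot>\<^sub>v w) = \<mu> \<cdot>\<^sub>v (A *\<^sub>v w) - \<nu> \<cdot>\<^sub>v (\<mu> \<cdot>\<^sub>v w)"
    using A N w by (simp add: mult_minus_distrib_mat_vec[of _ n n] mult_mat_vec[of _ n n])
  then show ?thesis using A w by (intro eq_vecI) (auto simp: algebra_simps)
qed

lemma eigenvector_pow_mat_coeff:
  fixes A :: "'a::field mat"
  assumes A: "A \<in> carrier_mat n n" and w: "eigenvector A w \<nu>" "A ^\<^sub>m h *\<^sub>v w = \<mu> \<cdot>\<^sub>v w"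
  shows "\<nu> ^ h = \<mu>"
  using smult_vec_cancel[of w n] eigenvector_pow[OF A w(1), of h] w A
  unfolding eigenvector_def by auto

lemma geom_sum_mat_injective_on_pow_eigenspace:
  fixes A :: "complex mat"
  assumes A: "A \<in> carrier_mat n n" and h: "0 < h"
    and inj: "inj_on (\<lambda>a. a ^ h) {a. eigenvalue A a}"
    and \<alpha>: "eigenvalue A \<alpha>" "\<alpha> \<noteq> 0"
    and u: "u \<in> carrier_vec n" "A ^\<^sub>m h *\<^sub>v u = \<alpha> ^ h \<cdot>\<^sub>v u" "geom_sum_mat A \<alpha> h *\<^sub>v u = 0 \<cdot>\<^sub>v u"
  shows "u = 0\<^sub>v n"
proof (rule ccontr)
  assume "u \<noteq> 0\<^sub>v n"
  \<comment> \<open>on this invariant set every eigenvalue \<open>\<nu>\<close> of \<open>A\<close> has \<open>\<nu>^h = \<alpha>^h\<close>, hence \<open>\<nu> = \<alpha>\<close>,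
     and there \<open>geom_sum_mat A \<alpha> h\<close> acts as \<open>h \<alpha>^(h-1) \<noteq> 0\<close>\<close>
  define S where "S = {w \<in> carrier_vec n. A ^\<^sub>m h *\<^sub>v w = \<alpha> ^ h \<cdot>\<^sub>v w \<and> geom_sum_mat A \<alpha> h *\<^sub>v w = 0 \<cdot>\<^sub>v w}"
  have "A *\<^sub>v w - \<nu> \<cdot>\<^sub>v w \<in> S" if "w \<in> S" for w \<nu>
    using commute_mat_eigenspace_shift[OF A pow_carrier_mat[OF A] pow_mat_commute[OF A]]
      commute_mat_eigenspace_shift[OF A geom_sum_mat_carrier[OF A] geom_sum_mat_commute[OF A]] that A
    unfolding S_def by auto
  then obtain w \<nu> where w: "w \<in> S" "eigenvector A w \<nu>"
    using invariant_set_contains_eigenvector[OF A _ _ u(1) \<open>u \<noteq> 0\<^sub>v n\<close>, of S] u unfolding S_def by blast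
  then have "\<nu> ^ h = \<alpha> ^ h" "eigenvalue A \<nu>"
    using eigenvector_pow_mat_coeff[OF A] unfolding S_def eigenvalue_def by auto
  then have "\<nu> = \<alpha>" using inj \<alpha>(1) by (auto dest: inj_onD)
  then have "(of_nat h * \<alpha> ^ (h - 1)) \<cdot>\<^sub>v w = 0 \<cdot>\<^sub>v w"
    using w geom_sum_mat_eigenvector[OF A] unfolding S_def by auto
  then have "of_nat h * \<alpha> ^ (h - 1) = (0::complex)"
    using w(2) A unfolding eigenvector_def by (intro smult_vec_cancel[of w n]) auto
  then show False using h \<alpha>(2) by simp
qed

lemma eigenvector_of_pow_mat:
  fixes A :: "complex mat"
  assumes A: "A \<in> carrier_mat n n" and h: "0 < h" and nonsingular: "\<not> eigenvalue A 0"
    and inj: "inj_on (\<lambda>a. a ^ h) {a. eigenvalue A a}"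
    and v: "eigenvector (A ^\<^sub>m h) v \<mu>"
  obtains \<alpha> where "eigenvector A v \<alpha>"
proof -
  have vc: "v \<in> carrier_vec n" "v \<noteq> 0\<^sub>v n" and Bv: "A ^\<^sub>m h *\<^sub>v v = \<mu> \<cdot>\<^sub>v v"
    using v A unfolding eigenvector_def by auto
  define S where "S = {w \<in> carrier_vec n. A ^\<^sub>m h *\<^sub>v w = \<mu> \<cdot>\<^sub>v w}"
  have S_closed: "A *\<^sub>v w - \<nu> \<cdot>\<^sub>v w \<in> S" if "w \<in> S" for w \<nu>
    using commute_mat_eigenspace_shift[OF A pow_carrier_mat[OF A] pow_mat_commute[OF A]] that A
    unfolding S_def by auto
  obtain w \<alpha> where "w \<in> S" "eigenvector A w \<alpha>"
    using invariant_set_contains_eigenvector[OF A, of S] S_closed vc Bv unfolding S_def by blast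
  then have \<alpha>: "\<alpha> ^ h = \<mu>" "eigenvalue A \<alpha>" "\<alpha> \<noteq> 0"
    using eigenvector_pow_mat_coeff[OF A] nonsingular unfolding S_def eigenvalue_def by auto
  define u where "u = A *\<^sub>v v - \<alpha> \<cdot>\<^sub>v v"
  have "u \<in> S" unfolding u_def using S_closed[of v \<alpha>] vc Bv unfolding S_def by auto
  moreover have "geom_sum_mat A \<alpha> h *\<^sub>v u = 0 \<cdot>\<^sub>v u"
    unfolding u_def geom_sum_mat_mult_shift[OF A vc(1)] \<alpha>(1) Bv using vc A by (intro eq_vecI) auto
  ultimately have "u = 0\<^sub>v n"
    using geom_sum_mat_injective_on_pow_eigenspace[OF A h inj \<alpha>(2,3)] \<alpha>(1) unfolding S_def by blast
  then have "eigenvector A v \<alpha>"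
    using minus_vec_eq_0_iff[of "A *\<^sub>v v" n] A vc unfolding u_def eigenvector_def by auto
  then show ?thesis using that by blast
qed

lemma sample_obs_matrix_mult_vec:
  fixes A C :: "real mat"
  assumes A: "A \<in> carrier_mat n n" and C: "C \<in> carrier_mat 1 n"
    and x: "x \<in> carrier_vec n" and i: "i < length ts"
  shows "(map_mat complex_of_real (sample_obs_matrix A C ts) *\<^sub>v x) $ i
    = row (map_mat complex_of_real C) 0 \<bullet> (map_mat complex_of_real A ^\<^sub>m (ts ! i) *\<^sub>v x)"
proof -
  let ?Ac = "map_mat complex_of_real A" and ?Cc = "map_mat complex_of_real C" and ?t = "ts ! i"
  have hom: "map_mat complex_of_real (C * A ^\<^sub>m ?t) = ?Cc * ?Ac ^\<^sub>m ?t"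
    unfolding of_real_hom.mat_hom_mult[OF C pow_carrier_mat[OF A]] of_real_hom.mat_hom_pow[OF A] ..
  have "row (map_mat complex_of_real (sample_obs_matrix A C ts)) i = row (?Cc * ?Ac ^\<^sub>m ?t) 0"
  proof (rule eq_vecI)
    fix j assume "j < dim_vec (row (?Cc * ?Ac ^\<^sub>m ?t) 0)"
    then have "j < n" using A C by (simp split: if_splits)
    then show "row (map_mat complex_of_real (sample_obs_matrix A C ts)) i $ j
        = row (?Cc * ?Ac ^\<^sub>m ?t) 0 $ j"
      unfolding hom[symmetric] using A C i
      by (simp add: sample_obs_matrix_def mat_of_rows_index del: of_real_hom.mat_hom_mult)
  qed (use A C i in \<open>simp add: sample_obs_matrix_def\<close>)
  then have "(map_mat complex_of_real (sample_obs_matrix A C ts) *\<^sub>v x) $ i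
      = ((?Cc * ?Ac ^\<^sub>m ?t) *\<^sub>v x) $ 0"
    using A C i by (simp add: sample_obs_matrix_def)
  also have "\<dots> = row ?Cc 0 \<bullet> (?Ac ^\<^sub>m ?t *\<^sub>v x)"
    using A C x by (simp add: assoc_mult_mat_vec[of _ 1 n _ n])
  finally show ?thesis .
qed

lemma rank_sample_obs_matrix_eq_iff:
  fixes A C :: "real mat"
  assumes A: "A \<in> carrier_mat n n" and C: "C \<in> carrier_mat 1 n" and ts: "length ts = n"
  shows "vec_space.rank n (sample_obs_matrix A C ts) = n \<longleftrightarrow>
    (\<forall>x \<in> carrier_vec n. (\<forall>t \<in> set ts.
       row (map_mat complex_of_real C) 0 \<bullet> (map_mat complex_of_real A ^\<^sub>m t *\<^sub>v x) = 0) \<longrightarrow> x = 0\<^sub>v n)"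
proof -
  let ?O = "sample_obs_matrix A C ts"
  have O: "?O \<in> carrier_mat n n" "map_mat complex_of_real ?O \<in> carrier_mat n n"
    unfolding sample_obs_matrix_def using A ts by auto
  have kernel: "map_mat complex_of_real ?O *\<^sub>v x = 0\<^sub>v n \<longleftrightarrow> (\<forall>t \<in> set ts.
      row (map_mat complex_of_real C) 0 \<bullet> (map_mat complex_of_real A ^\<^sub>m t *\<^sub>v x) = 0)"
    if x: "x \<in> carrier_vec n" for x
  proof -
    have "map_mat complex_of_real ?O *\<^sub>v x = 0\<^sub>v n \<longleftrightarrow>
        (\<forall>i < n. (map_mat complex_of_real ?O *\<^sub>v x) $ i = 0)"
      using O(2) by (auto simp: vec_eq_iff simp del: index_mult_mat_vec)
    then show ?thesis using sample_obs_matrix_mult_vec[OF A C x] ts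
      by (simp del: index_mult_mat_vec add: all_set_conv_all_nth)
  qed
  have "vec_space.rank n ?O = n \<longleftrightarrow> det (map_mat complex_of_real ?O) \<noteq> 0"
    using vec_space.det_rank_iff[OF O(1)] by simp
  also have "\<dots> \<longleftrightarrow> \<not> (\<exists>x. x \<in> carrier_vec n \<and> x \<noteq> 0\<^sub>v n \<and> map_mat complex_of_real ?O *\<^sub>v x = 0\<^sub>v n)"
    using det_0_iff_vec_prod_zero[OF O(2)] by simp
  finally show ?thesis using kernel by blast
qed

lemma periodic_samples_determine_state:
  fixes A :: "complex mat" and c x :: "complex vec"
  assumes A: "A \<in> carrier_mat n n" and c: "c \<in> carrier_vec n" and h: "0 < h"
    and spectrum: "\<not> eigenvalue A 0" "inj_on (\<lambda>a. a ^ h) {a. eigenvalue A a}"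
    and observable: "\<And>y. y \<in> carrier_vec n \<Longrightarrow> (\<And>i. i < n \<Longrightarrow> c \<bullet> (A ^\<^sub>m i *\<^sub>v y) = 0) \<Longrightarrow> y = 0\<^sub>v n"
    and x: "x \<in> carrier_vec n" and samples: "\<And>k. k < n \<Longrightarrow> c \<bullet> (A ^\<^sub>m (t + k * h) *\<^sub>v x) = 0"
  shows "x = 0\<^sub>v n"
proof (rule ccontr)
  assume "x \<noteq> 0\<^sub>v n"
  define c' where "c' = transpose_mat (A ^\<^sub>m t) *\<^sub>v c"
  have c': "c' \<in> carrier_vec n"
    unfolding c'_def using A c by (meson mult_mat_vec_carrier pow_carrier_mat transpose_carrier_mat)
  have c'_scalar: "c' \<bullet> y = c \<bullet> (A ^\<^sub>m t *\<^sub>v y)" if "y \<in> carrier_vec n" for y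
    using transpose_vec_mult_scalar[of "A ^\<^sub>m t" n n y c] A c that unfolding c'_def by simp
  have "c' \<bullet> ((A ^\<^sub>m h) ^\<^sub>m k *\<^sub>v x) = 0" if "k < n" for k
  proof -
    have "(A ^\<^sub>m h) ^\<^sub>m k = A ^\<^sub>m (k * h)"
      using pow_mat_mult[OF A, of h k] by (simp add: mult.commute)
    moreover have "A ^\<^sub>m (k * h) *\<^sub>v x \<in> carrier_vec n"
      using A x by (meson mult_mat_vec_carrier pow_carrier_mat)
    moreover have "A ^\<^sub>m t *\<^sub>v (A ^\<^sub>m (k * h) *\<^sub>v x) = A ^\<^sub>m (t + k * h) *\<^sub>v x"
      using A x by (simp add: pow_mat_add[OF A, of t] assoc_mult_mat_vec[of _ n n _ n])
    ultimately show ?thesis using c'_scalar samples[OF that] by simp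
  qed
  then obtain v \<mu> where "eigenvector (A ^\<^sub>m h) v \<mu>" "c' \<bullet> v = 0"
    using krylov_orthogonal_imp_orthogonal_eigenvector[of "A ^\<^sub>m h" n c' x] A c' x \<open>x \<noteq> 0\<^sub>v n\<close>
    by auto
  moreover obtain \<alpha> where ev: "eigenvector A v \<alpha>"
    using eigenvector_of_pow_mat[OF A h spectrum calculation(1)] .
  ultimately have v: "v \<in> carrier_vec n" "v \<noteq> 0\<^sub>v n" "\<alpha> \<noteq> 0" "\<alpha> ^ t * (c \<bullet> v) = 0"
    using c c'_scalar eigenvector_pow[OF A ev] A spectrum(1) unfolding eigenvector_def eigenvalue_def
    by auto
  have "c \<bullet> (A ^\<^sub>m i *\<^sub>v v) = \<alpha> ^ i * (c \<bullet> v)" for i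
    using eigenvector_pow[OF A ev] c v by simp
  then show False using observable v by auto
qed

theorem theorem2:
  fixes A C :: "real mat" and n t1 tbar :: nat
  assumes "n \<ge> 1"
    and "A \<in> carrier_mat n n"
    and "C \<in> carrier_mat 1 n"
    and "observable A C"
    and "\<forall>z. ceigenvalue A z \<longrightarrow> z \<noteq> 0"
    and "tbar > 0"
    and "\<not> pathological_period A tbar"
  shows "vec_space.rank n (sample_obs_matrix A C (map (\<lambda>k. t1 + k * tbar) [0..<n])) = n"
proof -
  note A = assms(2) and C = assms(3)
  define Ac where "Ac = map_mat complex_of_real A"
  define c where "c = row (map_mat complex_of_real C) 0"
  have Ac: "Ac \<in> carrier_mat n n" unfolding Ac_def using A by simp
  have c: "c \<in> carrier_vec n" unfolding c_def using C row_carrier[of "map_mat complex_of_real C" 0] by simp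
  have spectrum: "\<not> eigenvalue Ac 0" "inj_on (\<lambda>a. a ^ tbar) {a. eigenvalue Ac a}"
    using assms(5-7) unfolding Ac_def ceigenvalue_def pathological_period_def inj_on_def by auto
  have "y = 0\<^sub>v n" if "y \<in> carrier_vec n" "\<And>i. i < n \<Longrightarrow> c \<bullet> (Ac ^\<^sub>m i *\<^sub>v y) = 0" for y
    using assms(4) rank_sample_obs_matrix_eq_iff[OF A C, of "[0..<n]", folded Ac_def c_def] that A
    unfolding observable_def by auto
  note periodic = periodic_samples_determine_state[OF Ac c assms(6) spectrum this]
  have ts: "length (map (\<lambda>k. t1 + k * tbar) [0..<n]) = n" by simp
  show ?thesis unfolding rank_sample_obs_matrix_eq_iff[OF A C ts, folded Ac_def c_def]
  proof (intro ballI impI)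
    fix x assume "x \<in> carrier_vec n"
      and "\<forall>t \<in> set (map (\<lambda>k. t1 + k * tbar) [0..<n]). c \<bullet> (Ac ^\<^sub>m t *\<^sub>v x) = 0"
    then show "x = 0\<^sub>v n" by (intro periodic[of x t1]) auto
  qed
qed

end
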